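(* Let $f:\mathbb{R}\to\mathbb{R}$ be a Topologically Anosov homeomorphism. Then $f$ has exactly one fixed point.
   Context: A homeomorphism $f:\mathbb{R}\to\mathbb{R}$ is Topologically Anosov if: (i) there is a continuous strictly positive $\epsilon:\mathbb{R}\to\mathbb{R}$ such that for all $x\neq y$ there is $k\in\mathbb{Z}$ with $|f^k(x)-f^k(y)|>\epsilon(f^k(x))$; and (ii) for every continuous strictly positive $\epsilon:\mathbb{R}\to\mathbb{R}$ there is a continuous strictly positive $\delta:\mathbb{R}\to\mathbb{R}$ such that every $\delta$-pseudo-orbit (a sequence $(x_n)_{n\in\mathbb{Z}}$ with $|f(x_n)-x_{n+1}|<\delta(f(x_n))$) is $\epsilon$-shadowed by an orbit (there is $x$ with $|x_n-f^n(x)|<\epsilon(x_n)$ for all $n$). *)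

theory Defs
  imports "HOL-Analysis.Analysis"
begin

definition zpow :: "(real \<Rightarrow> real) \<Rightarrow> int \<Rightarrow> real \<Rightarrow> real" where
  "zpow f k = (if 0 \<le> k then f ^^ nat k else inv f ^^ nat (- k))"

definition homeo_R :: "(real \<Rightarrow> real) \<Rightarrow> bool" where
  "homeo_R f \<longleftrightarrow> (\<exists>g. homeomorphism UNIV UNIV f g)"

definition pos_cont :: "(real \<Rightarrow> real) \<Rightarrow> bool" where
  "pos_cont e \<longleftrightarrow> continuous_on UNIV e \<and> (\<forall>x. 0 < e x)"

definition expansive_var :: "(real \<Rightarrow> real) \<Rightarrow> bool" where
  "expansive_var f \<longleftrightarrow> (\<exists>e. pos_cont e \<and>
     (\<forall>x y. x \<noteq> y \<longrightarrow> (\<exists>k::int. \<bar>zpow f k x - zpow f k y\<bar> > e (zpow f k x))))"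

definition pseudo_orbit :: "(real \<Rightarrow> real) \<Rightarrow> (real \<Rightarrow> real) \<Rightarrow> (int \<Rightarrow> real) \<Rightarrow> bool" where
  "pseudo_orbit f d xs \<longleftrightarrow> (\<forall>n. \<bar>f (xs n) - xs (n + 1)\<bar> < d (f (xs n)))"

definition shadowed :: "(real \<Rightarrow> real) \<Rightarrow> (real \<Rightarrow> real) \<Rightarrow> (int \<Rightarrow> real) \<Rightarrow> bool" where
  "shadowed f e xs \<longleftrightarrow> (\<exists>x. \<forall>n. \<bar>xs n - zpow f n x\<bar> < e (xs n))"

definition shadowing_var :: "(real \<Rightarrow> real) \<Rightarrow> bool" where
  "shadowing_var f \<longleftrightarrow> (\<forall>e. pos_cont e \<longrightarrow>
     (\<exists>d. pos_cont d \<and> (\<forall>xs. pseudo_orbit f d xs \<longrightarrow> shadowed f e xs)))"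

definition topologically_anosov :: "(real \<Rightarrow> real) \<Rightarrow> bool" where
  "topologically_anosov f \<longleftrightarrow> homeo_R f \<and> expansive_var f \<and> shadowing_var f"

end

theory Submission
  imports Defs
begin

(* A homeomorphism of the line is strictly monotone; a decreasing one has exactly one fixed point
   by the intermediate value theorem, so let f be increasing.

   Existence comes from shadowing. Without fixed points every orbit of f escapes to infinity in
   both time directions, so one can choose a positive 1/2-Lipschitz tolerance e that is so small
   along the orbit of 0 that an orbit staying e-close to it at arbitrarily large times must be the
   orbit of 0 itself. A pseudo-orbit that follows the orbit of 0 in the past and jumps at time 1
   onto the orbit of a point b with f b near f 0 can then only be shadowed if b = 0.

   Uniqueness comes from expansivity. Between two fixed points p < q the interval [p, q] is
   invariant and e has a positive minimum m on it. The orbit of a non-fixed x in [p, q] is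
   monotone and bounded in both time directions, so only finitely many of its steps are at least
   m long; a point y between x and f x close enough to x then stays m-close to x for all times. *)

lemma homeo_R_homeomorphism_inv:
  assumes "homeo_R f"
  shows "homeomorphism UNIV UNIV f (inv f)"
proof -
  obtain g where g: "homeomorphism UNIV UNIV f g"
    using assms unfolding homeo_R_def by blast
  then have "inv f = g"
    by (intro inv_equality) (auto dest: homeomorphism_apply1 homeomorphism_apply2)
  with g show ?thesis by simp
qed

lemma homeo_R_bij: "homeo_R f \<Longrightarrow> bij f"
  using homeo_R_homeomorphism_inv unfolding homeomorphism_def
  by (metis bijI' UNIV_I)

lemma strict_mono_inv_homeo_R:
  assumes "homeo_R f" "strict_mono f"
  shows "strict_mono (inv f)"
  using assms homeo_R_bij by (metis bij_is_inj bij_is_surj inv_f_f strict_mono_inv)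

lemma zpow_0 [simp]: "zpow f 0 x = x"
  by (simp add: zpow_def)

lemma zpow_1 [simp]: "zpow f 1 = f"
  by (simp add: zpow_def)

lemma zpow_of_nat [simp]: "zpow f (int n) = f ^^ n"
  by (simp add: zpow_def)

lemma zpow_neg_of_nat [simp]: "zpow f (- int n) = inv f ^^ n"
  by (cases "n = 0") (simp_all add: zpow_def)

lemma zpow_add_one:
  assumes "bij f"
  shows "zpow f (k + 1) x = f (zpow f k x)"
proof (cases k)
  case (nonneg n)
  then have "k + 1 = int (Suc n)" by simp
  with nonneg show ?thesis by (simp only: zpow_of_nat funpow.simps(2) comp_apply)
next
  case (neg n)
  then have "zpow f k x = inv f ((inv f ^^ n) x)" and "k + 1 = - int n"
    by (simp_all del: of_nat_Suc)
  then show ?thesis using bij_is_surj[OF assms] by (simp add: surj_f_inv_f)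
qed

lemma zpow_shift:
  assumes "bij f"
  shows "zpow f k (f x) = zpow f (k + 1) x"
proof (cases k)
  case (nonneg n)
  then show ?thesis using zpow_add_one[OF assms, of k x] by (simp add: funpow_swap1)
next
  case (neg n)
  then have "zpow f k (f x) = (inv f ^^ n) (inv f (f x))" and "k + 1 = - int n"
    by (simp_all add: funpow_Suc_right del: of_nat_Suc funpow.simps)
  then show ?thesis using bij_is_inj[OF assms] by simp
qed

lemma zpow_neg_zpow:
  assumes "bij f"
  shows "zpow f (- k) (zpow f k x) = x"
proof (cases k)
  case (nonneg n)
  then show ?thesis using inv_fn_o_fn_is_id[OF assms, of n] by (simp add: fun_eq_iff)
next
  case (neg n)
  then show ?thesis using fn_o_inv_fn_is_id[OF assms, of "Suc n"]
    by (simp add: fun_eq_iff del: of_nat_Suc)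
qed

lemma funpow_fixpoint: "h p = p \<Longrightarrow> (h ^^ n) p = p"
  by (induction n) auto

lemma zpow_fixpoint:
  assumes "bij f" "f p = p"
  shows "zpow f k p = p"
proof -
  have "inv f p = p" using assms by (metis bij_is_inj inv_f_f)
  with assms show ?thesis by (simp add: zpow_def funpow_fixpoint)
qed

lemma continuous_on_funpow:
  fixes h :: "'a::topological_space \<Rightarrow> 'a"
  shows "continuous_on UNIV h \<Longrightarrow> continuous_on UNIV (h ^^ n)"
  by (induction n) (auto simp: id_def intro: continuous_on_compose2[of UNIV h])

lemma continuous_on_zpow:
  assumes "homeo_R f"
  shows "continuous_on UNIV (zpow f k)"
  using homeo_R_homeomorphism_inv[OF assms]
  by (auto simp: zpow_def homeomorphism_def intro: continuous_on_funpow)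

lemma strict_mono_funpow:
  fixes h :: "'a::order \<Rightarrow> 'a"
  shows "strict_mono h \<Longrightarrow> strict_mono (h ^^ n)"
  by (induction n) (auto simp: strict_mono_def)

lemma strict_mono_zpow:
  assumes "homeo_R f" "strict_mono f"
  shows "strict_mono (zpow f k)"
  using assms strict_mono_inv_homeo_R by (simp add: zpow_def strict_mono_funpow)

lemma zpow_mem_fixpoint_interval:
  assumes "homeo_R f" "strict_mono f" "f p = p" "f q = q" "v \<in> {p..q}"
  shows "zpow f k v \<in> {p..q}"
proof -
  have "zpow f k p \<le> zpow f k v" "zpow f k v \<le> zpow f k q"
    using assms(5) strict_mono_zpow[OF assms(1,2)] by (auto simp: strict_mono_less_eq)
  then show ?thesis using zpow_fixpoint[OF homeo_R_bij[OF assms(1)]] assms(3,4) by simp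
qed

lemma funpow_orbit_monoseq:
  fixes h :: "'a::linorder \<Rightarrow> 'a"
  assumes "mono h"
  shows "monoseq (\<lambda>n. (h ^^ n) a)"
proof (cases "a \<le> h a")
  case True
  then have "(h ^^ n) a \<le> (h ^^ Suc n) a" for n
    using funpow_mono[OF assms True, of n] by (simp add: funpow_swap1)
  then show ?thesis by (simp add: monoseq_Suc)
next
  case False
  then have "(h ^^ Suc n) a \<le> (h ^^ n) a" for n
    using funpow_mono[OF assms, of "h a" a n] by (simp add: funpow_swap1)
  then show ?thesis by (simp add: monoseq_Suc)
qed

lemma orbit_limit_fixpoint:
  fixes h :: "'a::t2_space \<Rightarrow> 'a"
  assumes "isCont h L" "(\<lambda>n. (h ^^ n) a) \<longlonglongrightarrow> L"
  shows "h L = L"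
proof -
  have "(\<lambda>n. (h ^^ Suc n) a) \<longlonglongrightarrow> h L"
    using isCont_tendsto_compose[OF assms] by simp
  from this LIMSEQ_Suc[OF assms(2)] show ?thesis by (rule LIMSEQ_unique)
qed

lemma bounded_orbit_convergent:
  fixes h :: "real \<Rightarrow> real"
  assumes "mono h" "Bseq (\<lambda>n. (h ^^ n) a)"
  obtains L where "(\<lambda>n. (h ^^ n) a) \<longlonglongrightarrow> L"
  using Bseq_monoseq_convergent[OF assms(2) funpow_orbit_monoseq[OF assms(1)]]
  by (auto simp: convergent_def)

lemma orbit_increments_tendsto_zero:
  fixes h :: "real \<Rightarrow> real"
  assumes "mono h" "Bseq (\<lambda>n. (h ^^ n) a)"
  shows "(\<lambda>n. (h ^^ Suc n) a - (h ^^ n) a) \<longlonglongrightarrow> 0"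
proof -
  obtain L where L: "(\<lambda>n. (h ^^ n) a) \<longlonglongrightarrow> L"
    using bounded_orbit_convergent[OF assms] .
  have "(\<lambda>n. (h ^^ Suc n) a - (h ^^ n) a) \<longlonglongrightarrow> L - L"
    by (intro tendsto_diff LIMSEQ_Suc L)
  then show ?thesis by simp
qed

lemma orbit_tendsto_infinity:
  fixes h :: "real \<Rightarrow> real"
  assumes "mono h" "continuous_on UNIV h" "\<And>x. h x \<noteq> x"
  shows "filterlim (\<lambda>n. \<bar>(h ^^ n) a\<bar>) at_top sequentially"
  unfolding filterlim_at_top_dense
proof
  fix Z :: real
  let ?b = "\<lambda>n. (h ^^ n) a"
  have "\<not> Bseq ?b"
  proof
    assume "Bseq ?b"
    then obtain L where "?b \<longlonglongrightarrow> L" using bounded_orbit_convergent[OF assms(1)] by blast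
    then have "h L = L"
      using assms(2) by (intro orbit_limit_fixpoint) (simp_all add: continuous_on_eq_continuous_at)
    with assms(3) show False by blast
  qed
  then have "\<not> (\<forall>n. \<bar>?b n\<bar> \<le> \<bar>Z\<bar> + \<bar>a\<bar>)"
    using BseqI'[of ?b "\<bar>Z\<bar> + \<bar>a\<bar>"] by auto
  then obtain N where N: "\<bar>Z\<bar> + \<bar>a\<bar> < \<bar>?b N\<bar>"
    by (auto simp: not_le)
  have "Z < \<bar>?b n\<bar>" if "N \<le> n" for n
  proof -
    have "?b 0 \<le> ?b N \<and> ?b N \<le> ?b n \<or> ?b n \<le> ?b N \<and> ?b N \<le> ?b 0"
      using funpow_orbit_monoseq[OF assms(1), of a] that unfolding monoseq_def by (meson le0)
    with N show ?thesis by (simp only: funpow_0) linarith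
  qed
  then show "eventually (\<lambda>n. Z < \<bar>?b n\<bar>) sequentially"
    by (rule eventually_sequentiallyI)
qed

lemma finite_int_exceptions:
  assumes "eventually (\<lambda>n. P (int n)) sequentially"
    and "eventually (\<lambda>n. P (- int n)) sequentially"
  shows "finite {k::int. \<not> P k}"
proof -
  obtain N1 N2 where N1: "\<And>n. N1 \<le> n \<Longrightarrow> P (int n)" and N2: "\<And>n. N2 \<le> n \<Longrightarrow> P (- int n)"
    using assms unfolding eventually_sequentially by blast
  have outside: "P k" if "int N1 \<le> k \<or> k \<le> - int N2" for k
    using that
  proof
    assume "int N1 \<le> k"
    then have "k = int (nat k)" "N1 \<le> nat k" by auto
    then show ?thesis using N1 by metis
  next
    assume "k \<le> - int N2"
    then have "k = - int (nat (- k))" "N2 \<le> nat (- k)" by auto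
    then show ?thesis using N2 by metis
  qed
  have "{k. \<not> P k} \<subseteq> {- int N2 <..< int N1}"
  proof
    fix k assume "k \<in> {k. \<not> P k}"
    then have "\<not> (int N1 \<le> k \<or> k \<le> - int N2)" using outside by blast
    then show "k \<in> {- int N2 <..< int N1}" by simp
  qed
  then show ?thesis by (rule finite_subset) simp
qed

lemma finite_orbit_sublevel:
  assumes "homeo_R f" "strict_mono f" "\<And>x. f x \<noteq> x"
  shows "finite {n. \<bar>zpow f n a\<bar> \<le> R}"
proof -
  have hom: "homeomorphism UNIV UNIV f (inv f)"
    using homeo_R_homeomorphism_inv[OF assms(1)] .
  have "inv f x \<noteq> x" for x
    using assms(3)[of x] homeomorphism_apply2[OF hom, of x] by auto
  then have "filterlim (\<lambda>n. \<bar>(inv f ^^ n) a\<bar>) at_top sequentially"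
    using orbit_tendsto_infinity strict_mono_mono[OF strict_mono_inv_homeo_R[OF assms(1,2)]]
      homeomorphism_cont2[OF hom] by blast
  moreover have "filterlim (\<lambda>n. \<bar>(f ^^ n) a\<bar>) at_top sequentially"
    using orbit_tendsto_infinity strict_mono_mono[OF assms(2)] homeomorphism_cont1[OF hom] assms(3)
    by blast
  ultimately show ?thesis
    using finite_int_exceptions[of "\<lambda>k. R < \<bar>zpow f k a\<bar>"]
    by (simp add: filterlim_at_top_dense not_less)
qed

definition cone_minorant :: "('a \<Rightarrow> real) \<Rightarrow> ('a \<Rightarrow> real) \<Rightarrow> real \<Rightarrow> real" where
  "cone_minorant \<eta> orb w = Inf (insert 1 (range (\<lambda>n. \<eta> n + dist w (orb n) / 2)))"

lemma cone_minorant_le: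
  assumes "\<And>n. 0 < \<eta> n"
  shows "cone_minorant \<eta> orb w \<le> 1" "cone_minorant \<eta> orb w \<le> \<eta> n + dist w (orb n) / 2"
proof -
  have "0 \<le> \<eta> n + dist w (orb n) / 2" for n
    using assms[of n] by simp
  then have "bdd_below (insert 1 (range (\<lambda>n. \<eta> n + dist w (orb n) / 2)))"
    by (intro bdd_belowI[of _ 0]) auto
  then show "cone_minorant \<eta> orb w \<le> 1" "cone_minorant \<eta> orb w \<le> \<eta> n + dist w (orb n) / 2"
    unfolding cone_minorant_def by (auto intro: cInf_lower)
qed

lemma cone_minorant_greatest:
  assumes "m \<le> 1" "\<And>n. m \<le> \<eta> n + dist w (orb n) / 2"
  shows "m \<le> cone_minorant \<eta> orb w"
  unfolding cone_minorant_def using assms by (intro cInf_greatest) auto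

lemma lipschitz_cone_minorant:
  assumes "\<And>n. 0 < \<eta> n"
  shows "(1/2)-lipschitz_on UNIV (cone_minorant \<eta> orb)"
proof (rule lipschitz_onI)
  have le: "cone_minorant \<eta> orb w \<le> cone_minorant \<eta> orb w' + dist w w' / 2" for w w'
  proof -
    have "cone_minorant \<eta> orb w - dist w w' / 2 \<le> cone_minorant \<eta> orb w'"
    proof (rule cone_minorant_greatest)
      have "cone_minorant \<eta> orb w \<le> 1"
        by (rule cone_minorant_le) (fact assms)
      then show "cone_minorant \<eta> orb w - dist w w' / 2 \<le> 1"
        using zero_le_dist[of w w'] by linarith
      fix n
      have "cone_minorant \<eta> orb w \<le> \<eta> n + dist w (orb n) / 2"
        by (rule cone_minorant_le) (fact assms)
      then show "cone_minorant \<eta> orb w - dist w w' / 2 \<le> \<eta> n + dist w' (orb n) / 2"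
        using dist_triangle[of w "orb n" w'] by linarith
    qed
    then show ?thesis by simp
  qed
  show "dist (cone_minorant \<eta> orb x) (cone_minorant \<eta> orb y) \<le> 1/2 * dist x y" for x y
    using le[of x y] le[of y x] unfolding dist_real_def[of "cone_minorant \<eta> orb x"] dist_commute[of y]
    by linarith
qed simp

lemma cone_minorant_pos:
  assumes \<eta>_pos: "\<And>n. 0 < \<eta> n" and proper: "\<And>R. finite {n. \<bar>orb n\<bar> \<le> R}"
  shows "0 < cone_minorant \<eta> orb w"
proof -
  define A where "A = {n. \<bar>orb n\<bar> \<le> \<bar>w\<bar> + 2}"
  define m where "m = Min (insert 1 (\<eta> ` A))"
  have "finite A" using proper by (simp add: A_def)
  then have m_pos: "0 < m" and m_le: "m \<le> 1" "\<And>n. n \<in> A \<Longrightarrow> m \<le> \<eta> n"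
    using \<eta>_pos by (auto simp: m_def)
  have "m \<le> cone_minorant \<eta> orb w"
  proof (rule cone_minorant_greatest[OF m_le(1)])
    fix n
    show "m \<le> \<eta> n + dist w (orb n) / 2"
    proof (cases "n \<in> A")
      case True
      then show ?thesis using m_le(2)[OF True] zero_le_dist[of w "orb n"] by linarith
    next
      case False
      then have "2 < dist w (orb n)" by (auto simp: A_def dist_real_def)
      then show ?thesis using m_le(1) \<eta>_pos[of n] by linarith
    qed
  qed
  with m_pos show ?thesis by linarith
qed

lemma pseudo_orbit_splice:
  assumes "bij f" "\<And>w. 0 < \<delta> w" "\<bar>f a - f b\<bar> < \<delta> (f a)"
  shows "pseudo_orbit f \<delta> (\<lambda>n. if n \<le> 0 then zpow f n a else zpow f n b)"
    (is "pseudo_orbit f \<delta> ?xs")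
  unfolding pseudo_orbit_def
proof
  fix n :: int
  consider "n < 0" | "n = 0" | "0 < n" by linarith
  then show "\<bar>f (?xs n) - ?xs (n + 1)\<bar> < \<delta> (f (?xs n))"
  proof cases
    case 2
    then show ?thesis using assms(3) by simp
  qed (simp_all add: zpow_add_one[OF assms(1)] assms(2))
qed

lemma exists_orbit_pinning_radii:
  assumes hom: "homeo_R f"
  obtains \<eta> where "\<And>n. 0 < \<eta> n"
    and "\<And>x. (\<And>m::nat. \<exists>n. m \<le> \<bar>n\<bar> \<and> dist (zpow f n x) (zpow f n a) < \<eta> n) \<Longrightarrow> x = a"
proof -
  have bij: "bij f" using hom by (rule homeo_R_bij)
  have "\<exists>r>0. \<forall>v. dist v (zpow f n a) < r \<longrightarrow> dist (zpow f (- n) v) a < 1 / (of_int \<bar>n\<bar> + 1)" for n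
  proof -
    have "isCont (zpow f (- n)) (zpow f n a)"
      using continuous_on_zpow[OF hom] by (simp add: continuous_on_eq_continuous_at)
    moreover have "0 < 1 / (of_int \<bar>n\<bar> + 1 :: real)"
      by (simp add: add_nonneg_pos)
    ultimately show ?thesis
      unfolding continuous_at_eps_delta by (simp add: zpow_neg_zpow[OF bij])
  qed
  then obtain \<eta> where \<eta>_pos: "\<And>n. 0 < \<eta> n"
    and \<eta>_pull: "\<And>n v. dist v (zpow f n a) < \<eta> n \<Longrightarrow> dist (zpow f (- n) v) a < 1 / (of_int \<bar>n\<bar> + 1)"
    by metis
  have "x = a" if close: "\<And>m::nat. \<exists>n. m \<le> \<bar>n\<bar> \<and> dist (zpow f n x) (zpow f n a) < \<eta> n" for x
  proof (rule ccontr)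
    assume "x \<noteq> a"
    then obtain m :: nat where m: "inverse (real (Suc m)) < dist x a"
      using reals_Archimedean zero_less_dist_iff by blast
    obtain n where n: "m \<le> \<bar>n\<bar>" "dist (zpow f n x) (zpow f n a) < \<eta> n"
      using close by blast
    have "dist x a < 1 / (of_int \<bar>n\<bar> + 1)"
      using \<eta>_pull[OF n(2)] by (simp add: zpow_neg_zpow[OF bij])
    also have "\<dots> \<le> inverse (real (Suc m))"
      using n(1) by (simp add: inverse_eq_divide frac_le)
    finally show False using m by simp
  qed
  with \<eta>_pos that show ?thesis by blast
qed

lemma shadowing_imp_ex_fixpoint:
  assumes hom: "homeo_R f" and inc: "strict_mono f" and sh: "shadowing_var f"
  shows "\<exists>p. f p = p"
proof (rule ccontr)
  assume "\<nexists>p. f p = p"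
  then have free: "\<And>x. f x \<noteq> x" by blast
  have bij: "bij f" using hom by (rule homeo_R_bij)
  define orb where "orb n = zpow f n 0" for n
  obtain \<eta> where \<eta>_pos: "\<And>n. 0 < \<eta> n"
    and pinned: "\<And>x. (\<And>m::nat. \<exists>n. m \<le> \<bar>n\<bar> \<and> dist (zpow f n x) (orb n) < \<eta> n) \<Longrightarrow> x = 0"
    using exists_orbit_pinning_radii[OF hom, of 0] unfolding orb_def by blast
  define e where "e = cone_minorant (\<lambda>n. \<eta> n / 2) orb"
  have half_pos: "\<And>n. 0 < \<eta> n / 2" using \<eta>_pos by simp
  have e_lip: "(1/2)-lipschitz_on UNIV e"
    unfolding e_def by (rule lipschitz_cone_minorant[OF half_pos])
  have e_orb: "e (orb n) \<le> \<eta> n / 2" for n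
  proof -
    have "e (orb n) \<le> \<eta> n / 2 + dist (orb n) (orb n) / 2"
      unfolding e_def by (rule cone_minorant_le) (fact half_pos)
    then show ?thesis by simp
  qed
  have "finite {n. \<bar>orb n\<bar> \<le> R}" for R
    using finite_orbit_sublevel[OF hom inc free] by (simp add: orb_def)
  then have "0 < e w" for w
    unfolding e_def using half_pos by (rule cone_minorant_pos[rotated])
  then have "pos_cont e"
    using lipschitz_on_continuous_on[OF e_lip] by (simp add: pos_cont_def)
  then obtain \<delta> where \<delta>_pos: "\<And>w. 0 < \<delta> w" and \<delta>: "\<And>xs. pseudo_orbit f \<delta> xs \<Longrightarrow> shadowed f e xs"
    using sh unfolding shadowing_var_def pos_cont_def by blast
  define b where "b = inv f (f 0 + \<delta> (f 0) / 2)"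
  have fb: "f b = f 0 + \<delta> (f 0) / 2"
    unfolding b_def by (rule surj_f_inv_f[OF bij_is_surj[OF bij]])
  have "pseudo_orbit f \<delta> (\<lambda>n. if n \<le> 0 then zpow f n 0 else zpow f n b)"
    by (rule pseudo_orbit_splice[OF bij \<delta>_pos]) (use \<delta>_pos[of "f 0"] in \<open>simp add: fb\<close>)
  \<comment> \<open>Its past pins the shadowing point to 0; the Lipschitz bound on e then lets its future pin b to 0.\<close>
  then obtain x where x: "\<And>n. \<bar>(if n \<le> 0 then orb n else zpow f n b) - zpow f n x\<bar>
      < e (if n \<le> 0 then orb n else zpow f n b)"
    using \<delta> unfolding shadowed_def orb_def by blast
  have "x = 0"
  proof (rule pinned)
    fix m :: nat
    have "dist (zpow f (- int m) x) (orb (- int m)) < \<eta> (- int m)"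
      using x[of "- int m"] e_orb[of "- int m"] \<eta>_pos[of "- int m"]
      by (simp add: dist_real_def abs_minus_commute)
    then show "\<exists>n. m \<le> \<bar>n\<bar> \<and> dist (zpow f n x) (orb n) < \<eta> n"
      by (intro exI[of _ "- int m"]) simp
  qed
  have "b = 0"
  proof (rule pinned)
    fix m :: nat
    let ?n = "int m + 1" and ?w = "zpow f (int m + 1) b"
    have "dist ?w (orb ?n) < e ?w"
      using x[of ?n] \<open>x = 0\<close> by (simp add: orb_def dist_real_def)
    also have "\<dots> \<le> e (orb ?n) + 1/2 * dist ?w (orb ?n)"
      using lipschitz_onD[OF e_lip, of ?w "orb ?n"] unfolding dist_real_def[of "e ?w"] abs_le_iff
      by simp
    finally have "dist ?w (orb ?n) < \<eta> ?n"
      using e_orb[of ?n] by linarith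
    then show "\<exists>n. m \<le> \<bar>n\<bar> \<and> dist (zpow f n b) (orb n) < \<eta> n"
      by (intro exI[of _ ?n]) simp
  qed
  then show False
    using fb \<delta>_pos[of "f 0"] by simp
qed

lemma exists_near_on_segment:
  fixes \<phi> :: "'i \<Rightarrow> real \<Rightarrow> real"
  assumes "finite F" "\<And>k. k \<in> F \<Longrightarrow> isCont (\<phi> k) x" "0 < m"
  shows "\<exists>t. 0 < t \<and> t < 1 \<and> (\<forall>k\<in>F. \<bar>\<phi> k (x + t * (c - x)) - \<phi> k x\<bar> < m)"
proof -
  have "((\<lambda>t. x + t * (c - x)) \<longlongrightarrow> x + 0 * (c - x)) (at_right 0)"
    by (intro tendsto_intros)
  then have segment: "((\<lambda>t. x + t * (c - x)) \<longlongrightarrow> x) (at_right 0)"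
    by simp
  have "\<forall>\<^sub>F t in at_right 0. \<bar>\<phi> k (x + t * (c - x)) - \<phi> k x\<bar> < m" if "k \<in> F" for k
  proof -
    have "((\<lambda>t. \<phi> k (x + t * (c - x))) \<longlongrightarrow> \<phi> k x) (at_right 0)"
      by (rule isCont_tendsto_compose[OF assms(2)[OF that] segment])
    from tendstoD[OF this assms(3)] show ?thesis
      by (simp add: dist_real_def)
  qed
  then have "\<forall>\<^sub>F t in at_right 0. \<forall>k\<in>F. \<bar>\<phi> k (x + t * (c - x)) - \<phi> k x\<bar> < m"
    by (intro eventually_ball_finite[OF assms(1)] ballI)
  moreover have "\<forall>\<^sub>F t in at_right (0::real). 0 < t \<and> t < 1"
    unfolding eventually_at_right_field by (intro exI[of _ 1]) auto
  ultimately have "\<forall>\<^sub>F t in at_right 0. 0 < t \<and> t < 1 \<and> (\<forall>k\<in>F. \<bar>\<phi> k (x + t * (c - x)) - \<phi> k x\<bar> < m)"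
    by eventually_elim blast
  then show ?thesis
    by (rule eventually_happens'[OF trivial_limit_at_right_real])
qed

lemma mono_dist_on_segment:
  fixes \<phi> :: "real \<Rightarrow> real"
  assumes "mono \<phi>" "0 \<le> t" "t \<le> 1"
  shows "\<bar>\<phi> (x + t * (c - x)) - \<phi> x\<bar> \<le> \<bar>\<phi> c - \<phi> x\<bar>"
proof -
  let ?y = "x + t * (c - x)"
  have "?y - x = t * (c - x)" "c - ?y = (1 - t) * (c - x)"
    by (simp_all add: algebra_simps)
  then consider "x \<le> ?y" "?y \<le> c" | "?y \<le> x" "c \<le> ?y"
    using assms(2,3) by (smt (verit) mult_nonneg_nonneg mult_nonneg_nonpos)
  then show ?thesis
  proof cases
    case 1
    then have "\<phi> x \<le> \<phi> ?y" "\<phi> ?y \<le> \<phi> c" using monoD[OF assms(1)] by auto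
    then show ?thesis by simp
  next
    case 2
    then have "\<phi> ?y \<le> \<phi> x" "\<phi> c \<le> \<phi> ?y" using monoD[OF assms(1)] by auto
    then show ?thesis by simp
  qed
qed

lemma finite_long_steps:
  assumes hom: "homeo_R f" and inc: "strict_mono f"
    and "f p = p" "f q = q" "x \<in> {p..q}" "0 < m"
  shows "finite {k. m \<le> \<bar>f (zpow f k x) - zpow f k x\<bar>}"
proof -
  have bij: "bij f" using hom by (rule homeo_R_bij)
  have in_pq: "zpow f k x \<in> {p..q}" for k
    by (rule zpow_mem_fixpoint_interval[OF hom inc assms(3-5)])
  have bounded: "Bseq (\<lambda>n. (h ^^ n) x)" if "h = f \<or> h = inv f" for h
  proof (rule BseqI')
    fix n
    have "(h ^^ n) x \<in> {p..q}"
      using that in_pq[of "int n"] in_pq[of "- int n"] by auto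
    then show "norm ((h ^^ n) x) \<le> \<bar>p\<bar> + \<bar>q\<bar>" by auto
  qed
  let ?short = "\<lambda>k. \<bar>f (zpow f k x) - zpow f k x\<bar> < m"
  have "finite {k. \<not> ?short k}"
  proof (rule finite_int_exceptions)
    have "(\<lambda>n. (f ^^ Suc n) x - (f ^^ n) x) \<longlonglongrightarrow> 0"
      using orbit_increments_tendsto_zero strict_mono_mono[OF inc] bounded by blast
    from tendstoD[OF this \<open>0 < m\<close>] show "eventually (\<lambda>n. ?short (int n)) sequentially"
      by (simp add: dist_real_def)
    have "(\<lambda>n. (inv f ^^ Suc n) x - (inv f ^^ n) x) \<longlonglongrightarrow> 0"
      using orbit_increments_tendsto_zero strict_mono_mono[OF strict_mono_inv_homeo_R[OF hom inc]]
        bounded by blast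
    from tendstoD[OF this \<open>0 < m\<close>] have "eventually (\<lambda>n. ?short (- int (Suc n))) sequentially"
      by (simp add: dist_real_def abs_minus_commute surj_f_inv_f[OF bij_is_surj[OF bij]]
          del: of_nat_Suc)
    then show "eventually (\<lambda>n. ?short (- int n)) sequentially"
      using eventually_sequentially_Suc[of "\<lambda>n. ?short (- int n)"] by blast
  qed
  then show ?thesis by (simp add: not_less)
qed

lemma exists_close_orbits_between_fixpoints:
  assumes hom: "homeo_R f" and inc: "strict_mono f"
    and pq: "p < q" "f p = p" "f q = q" and "0 < m"
  shows "\<exists>x\<in>{p..q}. \<exists>y. y \<noteq> x \<and> (\<forall>k. \<bar>zpow f k y - zpow f k x\<bar> < m)"
proof (cases "\<forall>v\<in>{p..q}. f v = v")
  case True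
  define y where "y = min q (p + m / 2)"
  have "y \<in> {p..q}" "y \<noteq> p" "\<bar>y - p\<bar> < m"
    using pq(1) \<open>0 < m\<close> by (auto simp: y_def min_def)
  moreover have "zpow f k v = v" if "v \<in> {p..q}" for k v
    using zpow_fixpoint[OF homeo_R_bij[OF hom]] True that by blast
  ultimately show ?thesis
    using pq(1) by (intro bexI[of _ p] exI[of _ y]) auto
next
  case False
  then obtain x where x: "x \<in> {p..q}" "f x \<noteq> x" by blast
  have bij: "bij f" using hom by (rule homeo_R_bij)
  let ?long = "{k. m \<le> \<bar>f (zpow f k x) - zpow f k x\<bar>}"
  have "isCont (zpow f k) x" for k
    using continuous_on_zpow[OF hom] by (simp add: continuous_on_eq_continuous_at)
  then obtain t where t: "0 < t" "t < 1"
    and near: "\<forall>k\<in>?long. \<bar>zpow f k (x + t * (f x - x)) - zpow f k x\<bar> < m"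
    using exists_near_on_segment[OF finite_long_steps[OF hom inc pq(2,3) x(1) \<open>0 < m\<close>] _ \<open>0 < m\<close>,
        where \<phi> = "zpow f" and x = x and c = "f x"] by blast
  define y where "y = x + t * (f x - x)"
  have "\<bar>zpow f k y - zpow f k x\<bar> < m" for k
  proof (cases "k \<in> ?long")
    case False
    have "\<bar>zpow f k y - zpow f k x\<bar> \<le> \<bar>zpow f k (f x) - zpow f k x\<bar>"
      unfolding y_def using t strict_mono_mono[OF strict_mono_zpow[OF hom inc]]
      by (intro mono_dist_on_segment) auto
    also have "\<dots> = \<bar>f (zpow f k x) - zpow f k x\<bar>"
      by (simp add: zpow_shift[OF bij] zpow_add_one[OF bij])
    finally show ?thesis using False by simp
  qed (use near y_def in simp)
  moreover have "y \<noteq> x"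
    using t x(2) by (simp add: y_def)
  ultimately show ?thesis
    using x(1) by blast
qed

lemma expansive_imp_fixpoint_unique:
  assumes hom: "homeo_R f" and inc: "strict_mono f" and exp: "expansive_var f"
    and "f p = p" "f q = q"
  shows "p = q"
proof -
  obtain e where e: "pos_cont e"
    and sep: "\<And>x y. x \<noteq> y \<Longrightarrow> \<exists>k. e (zpow f k x) < \<bar>zpow f k x - zpow f k y\<bar>"
    using exp unfolding expansive_var_def by blast
  have no_pair: False if ab: "a < b" "f a = a" "f b = b" for a b
  proof -
    have "continuous_on {a..b} e"
      using e by (auto simp: pos_cont_def intro: continuous_on_subset)
    from continuous_attains_inf[OF compact_Icc _ this] ab(1)
    obtain v where v: "\<forall>w\<in>{a..b}. e v \<le> e w"
      by auto
    have "0 < e v" using e by (simp add: pos_cont_def)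
    then obtain x y where "x \<in> {a..b}" "y \<noteq> x" and close: "\<And>k. \<bar>zpow f k y - zpow f k x\<bar> < e v"
      using exists_close_orbits_between_fixpoints[OF hom inc ab] by blast
    from sep[OF not_sym[OF \<open>y \<noteq> x\<close>]]
    obtain k where "e (zpow f k x) < \<bar>zpow f k x - zpow f k y\<bar>"
      by blast
    moreover have "e v \<le> e (zpow f k x)"
      using v zpow_mem_fixpoint_interval[OF hom inc ab(2,3) \<open>x \<in> {a..b}\<close>] by blast
    ultimately show False
      using close[of k] by (simp add: abs_minus_commute)
  qed
  from assms(4,5) show ?thesis
    by (cases p q rule: linorder_cases) (auto dest: no_pair)
qed

lemma strict_antimono_ex1_fixpoint:
  fixes f :: "real \<Rightarrow> real"
  assumes cont: "continuous_on UNIV f" and dec: "strict_antimono_on UNIV f"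
  shows "\<exists>!p. f p = p"
proof -
  have dec_less: "f v < f u" if "u < v" for u v
    using dec that by (simp add: monotone_on_def)
  define h where "h x = f x - x" for x
  have "continuous_on {a..b} h" for a b
    unfolding h_def by (intro continuous_intros continuous_on_subset[OF cont]) auto
  moreover have "h (min 0 (f 0)) \<ge> 0 \<and> h (max 0 (f 0)) \<le> 0"
    using dec_less[of 0 "f 0"] dec_less[of "f 0" 0] by (cases "0 < f 0") (auto simp: h_def min_def max_def)
  ultimately have "\<exists>p\<ge>min 0 (f 0). p \<le> max 0 (f 0) \<and> h p = 0"
    by (intro IVT2') auto
  then obtain p where "h p = 0" by blast
  moreover have "q = p" if "f q = q" "f p = p" for p q
    using dec_less[of p q] dec_less[of q p] that by (cases p q rule: linorder_cases) auto
  ultimately show ?thesis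
    unfolding h_def by (metis eq_iff_diff_eq_0)
qed

theorem mainTheorem15:
  fixes f :: "real \<Rightarrow> real"
  assumes "topologically_anosov f"
  shows "\<exists>!p. f p = p"
proof -
  have hom: "homeo_R f" and exp: "expansive_var f" and sh: "shadowing_var f"
    using assms unfolding topologically_anosov_def by auto
  have "continuous_on UNIV f" "inj f"
    using homeo_R_homeomorphism_inv[OF hom] homeo_R_bij[OF hom]
    by (auto simp: homeomorphism_def bij_is_inj)
  then consider "strict_mono f" | "strict_antimono_on UNIV f"
    using injective_eq_monotone_map[of UNIV f] by auto
  then show ?thesis
  proof cases
    case 1
    then show ?thesis
      using shadowing_imp_ex_fixpoint[OF hom 1 sh] expansive_imp_fixpoint_unique[OF hom 1 exp] by blast
  next
    case 2
    then show ?thesis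
      using strict_antimono_ex1_fixpoint \<open>continuous_on UNIV f\<close> by blast
  qed
qed

end
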